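(* Consider the three-level model described in the context, in which the first predator's prey selection is fixed (so that $\tilde X_t$ has a distribution not depending on $t$; call it $\tilde X$), and a second predator consumes first predators; let $\tilde Y$ denote the parasite burden of a first predator given that it has been consumed by the second predator. Then \[ \frac{\mathbb{E}(\tilde{Y}^{2})}{\mathbb{E}(\tilde{Y})} \geq \mathbb{E}(\tilde{Y}) + \frac{\mathbb{E}(\tilde{X}^{2})}{\mathbb{E}(\tilde{X})}. \]
   Context: Model. The parasite burden of a prey aged $t\ge 0$ is $X_t$, where $(X_t)_{t\ge0}$ is a non-decreasing integer-valued stochastic process with $X_0=0$ (all moments used are assumed finite and the relevant expectations positive). Prey ages have probability density $f_A$ on $[0,\infty)$. A (first) predator encounters random prey at the times of a non-homogeneous Poisson process with intensity $\phi$; a predator aged $t$ consumes an encountered prey aged $u$ with probability $p(u,t)$. Consumption times form a Poisson process with intensity $\psi(t)=\phi(t)\int_0^\infty p(u,t)f_A(u)\,du$. The age $\tilde A_t$ of a prey consumed by a predator aged $t$ has density $p(a,t)f_A(a)/\int_0^\infty p(u,t)f_A(u)\,du$, and $\tilde X_t=X_{\tilde A_t}$ ($\tilde A_t$ independent of $X$). Consumed prey transfer all their parasites, with independent contributions; the first predator's burden $Y_t$ at age $t$ ($Y_0=0$) is the sum over consumption times $s\le t$ of independent copies of $\tilde X_s$. Fixed prey selection means that for all $s<t$ the ratio $p(u,t)/p(u,s)$ does not depend on $u$, so the law of $\tilde A_t$, hence of $\tilde X_t$, does not depend on $t$. A second predator consumes first predators; the age of a first predator consumed by the second predator has probability density $f_{\tilde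 A}$ (the second predator's prey selection being fixed), and $\tilde Y=Y_{\tilde A}$ where $\tilde A\sim f_{\tilde A}$ is independent of the process $(Y_t)$. *)

theory Defs
  imports "HOL-Probability.Probability"
begin

text \<open>Number of consumption events of a Poisson process with mean measure L
  (Poisson(L); for L = 0 it is the point mass at 0).\<close>
definition poisson0 :: "real \<Rightarrow> nat pmf" where
  "poisson0 L = (if 0 < L then poisson_pmf L else return_pmf 0)"

primrec iid_sum :: "nat \<Rightarrow> nat pmf \<Rightarrow> nat pmf" where
  "iid_sum 0 X = return_pmf 0"
| "iid_sum (Suc n) X = bind_pmf (iid_sum n X) (\<lambda>s. map_pmf (\<lambda>x. s + x) X)"

definition cum_int :: "(real \<Rightarrow> real) \<Rightarrow> real \<Rightarrow> real" where
  "cum_int psi t = (\<integral>s\<in>{0..t}. psi s \<partial>lborel)"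

text \<open>Law of the first predator's burden Y_t: sum over the consumption times
  (Poisson process with intensity psi) of independent copies of X~ (law Xt).\<close>
definition Y_law :: "(real \<Rightarrow> real) \<Rightarrow> nat pmf \<Rightarrow> real \<Rightarrow> nat pmf" where
  "Y_law psi Xt t = bind_pmf (poisson0 (cum_int psi t)) (\<lambda>n. iid_sum n Xt)"

text \<open>Law of the age A~ of a first predator consumed by the second predator.\<close>
definition age_law :: "(real \<Rightarrow> real) \<Rightarrow> real measure" where
  "age_law fA = density lborel (\<lambda>a. ennreal (fA a) * indicator {0..} a)"

text \<open>Law of Y~ = Y_{A~}, with A~ independent of the process Y.\<close>
definition Ytilde_law :: "(real \<Rightarrow> real) \<Rightarrow> nat pmf \<Rightarrow> (real \<Rightarrow> real) \<Rightarrow> nat measure" where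
  "Ytilde_law psi Xt fA = age_law fA \<bind> (\<lambda>a. measure_pmf (Y_law psi Xt a))"

end

theory Submission
  imports Defs
begin

text \<open>Writing \<open>\<Lambda>\<close> for the cumulative consumption intensity and \<open>m\<^sub>1, m\<^sub>2\<close> for the first two
  moments of \<open>X\<close>, the burden \<open>Y\<^sub>t\<close> is compound Poisson, so that
  \<open>E Y\<^sub>t = \<Lambda>(t) m\<^sub>1\<close> and \<open>E Y\<^sub>t\<^sup>2 = \<Lambda>(t) m\<^sub>2 + \<Lambda>(t)\<^sup>2 m\<^sub>1\<^sup>2\<close> (Poisson factorial moments).
  Mixing over the independent age \<open>A\<close> gives \<open>E Y = E\<Lambda>(A) m\<^sub>1\<close> and
  \<open>E Y\<^sup>2 = E\<Lambda>(A) m\<^sub>2 + E(\<Lambda>(A)\<^sup>2) m\<^sub>1\<^sup>2\<close>, and the inequality reduces to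
  \<open>(E\<Lambda>(A))\<^sup>2 \<le> E(\<Lambda>(A)\<^sup>2)\<close>, i.e. to the nonnegativity of a variance.\<close>

lemma nn_integral_pmf_lincomb:
  fixes P :: "'a pmf" and f g :: "'a \<Rightarrow> real"
  assumes "\<And>x. 0 \<le> f x" "\<And>x. 0 \<le> g x"
    and "(\<integral>\<^sup>+x. ennreal (f x) \<partial>P) = ennreal a" "(\<integral>\<^sup>+x. ennreal (g x) \<partial>P) = ennreal b"
    and "0 \<le> c0" "0 \<le> c1" "0 \<le> c2" "0 \<le> a" "0 \<le> b"
  shows "(\<integral>\<^sup>+x. ennreal (c0 + c1 * f x + c2 * g x) \<partial>P) = ennreal (c0 + c1 * a + c2 * b)"
proof -
  have "(\<integral>\<^sup>+x. ennreal (c0 + c1 * f x + c2 * g x) \<partial>P)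
      = (\<integral>\<^sup>+x. ennreal c0 + ennreal c1 * ennreal (f x) + ennreal c2 * ennreal (g x) \<partial>P)"
    using assms by (intro nn_integral_cong) (simp add: ennreal_mult)
  also have "\<dots> = ennreal c0 + ennreal c1 * ennreal a + ennreal c2 * ennreal b"
    using assms by (simp add: nn_integral_add nn_integral_cmult measure_pmf.emeasure_space_1)
  also have "\<dots> = ennreal (c0 + c1 * a + c2 * b)"
    using assms by (simp add: ennreal_mult)
  finally show ?thesis .
qed

lemma nn_integral_pmf_nat_sums:
  fixes P :: "nat pmf" and f :: "nat \<Rightarrow> real"
  assumes "\<And>n. 0 \<le> f n" "(\<lambda>n. pmf P n * f n) sums s"
  shows "(\<integral>\<^sup>+n. ennreal (f n) \<partial>P) = ennreal s"
proof -
  have "(\<integral>\<^sup>+n. ennreal (f n) \<partial>P) = (\<Sum>n. ennreal (pmf P n * f n))"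
    by (simp add: nn_integral_measure_pmf nn_integral_count_space_nat ennreal_mult assms(1))
  also have "\<dots> = ennreal s"
    using assms by (intro suminf_ennreal_eq) auto
  finally show ?thesis .
qed

lemma nn_integral_iid_sum_id:
  fixes X :: "nat pmf"
  assumes m1: "(\<integral>\<^sup>+x. ennreal (real x) \<partial>X) = ennreal m1" and "0 \<le> m1"
  shows "(\<integral>\<^sup>+y. ennreal (real y) \<partial>iid_sum n X) = ennreal (real n * m1)"
proof (induction n)
  case (Suc n)
  have "(\<integral>\<^sup>+x. ennreal (real s + 1 * real x + 0 * real x) \<partial>X) = ennreal (real s + 1 * m1 + 0 * m1)"
    for s :: nat
    by (rule nn_integral_pmf_lincomb[OF _ _ m1 m1]) (use \<open>0 \<le> m1\<close> in auto)
  then have "(\<integral>\<^sup>+y. ennreal (real y) \<partial>iid_sum (Suc n) X)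
      = (\<integral>\<^sup>+s. ennreal (m1 + 1 * real s + 0 * real s) \<partial>iid_sum n X)"
    by (simp add: add.commute)
  also have "\<dots> = ennreal (m1 + 1 * (real n * m1) + 0 * (real n * m1))"
    by (rule nn_integral_pmf_lincomb) (use Suc \<open>0 \<le> m1\<close> in auto)
  finally show ?case by (simp add: algebra_simps)
qed simp

lemma nn_integral_iid_sum_square:
  fixes X :: "nat pmf"
  assumes m1: "(\<integral>\<^sup>+x. ennreal (real x) \<partial>X) = ennreal m1"
    and m2: "(\<integral>\<^sup>+x. ennreal (real x ^ 2) \<partial>X) = ennreal m2"
    and "0 \<le> m1" "0 \<le> m2"
  shows "(\<integral>\<^sup>+y. ennreal (real y ^ 2) \<partial>iid_sum n X)
    = ennreal (real n * m2 + real n * (real n - 1) * m1 ^ 2)"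
proof (induction n)
  case (Suc n)
  have "0 \<le> real n * (real n - 1)"
    by (cases n) auto
  have "(\<integral>\<^sup>+x. ennreal (real s ^ 2 + (2 * real s) * real x + 1 * real x ^ 2) \<partial>X)
      = ennreal (real s ^ 2 + (2 * real s) * m1 + 1 * m2)" for s :: nat
    by (rule nn_integral_pmf_lincomb[OF _ _ m1 m2]) (use assms in auto)
  then have "(\<integral>\<^sup>+y. ennreal (real y ^ 2) \<partial>iid_sum (Suc n) X)
      = (\<integral>\<^sup>+s. ennreal (m2 + (2 * m1) * real s + 1 * real s ^ 2) \<partial>iid_sum n X)"
    by (simp add: power2_sum algebra_simps)
  also have "\<dots> = ennreal (m2 + (2 * m1) * (real n * m1)
      + 1 * (real n * m2 + real n * (real n - 1) * m1 ^ 2))"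
    by (rule nn_integral_pmf_lincomb)
      (use Suc assms nn_integral_iid_sum_id[OF m1] \<open>0 \<le> real n * (real n - 1)\<close> in auto)
  finally show ?case by (simp add: algebra_simps power2_eq_square)
qed simp

lemma pmf_poisson0:
  "pmf (poisson0 l) n = (if 0 < l then l ^ n / fact n * exp (- l) else of_bool (n = 0))"
  by (simp add: poisson0_def)

text \<open>The factor \<open>fact n / fact (n - k) * of_bool (k \<le> n)\<close> is the falling factorial
  \<open>n (n - 1) \<dots> (n - k + 1)\<close>, written so as to survive truncated subtraction.\<close>

lemma poisson_factorial_moment_sums:
  fixes l :: real
  shows "(\<lambda>n. l ^ n / fact n * exp (- l) * (fact n / fact (n - k) * of_bool (k \<le> n))) sums l ^ k"
proof -
  have "(\<lambda>i. l ^ k * exp (- l) * (l ^ i /\<^sub>R fact i)) sums (l ^ k * exp (- l) * exp l)"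
    by (intro sums_mult exp_converges)
  moreover have "l ^ k * exp (- l) * exp l = l ^ k"
    by (simp add: exp_minus)
  moreover have "l ^ (i + k) / fact (i + k) * exp (- l)
      * (fact (i + k) / fact (i + k - k) * of_bool (k \<le> i + k))
      = l ^ k * exp (- l) * (l ^ i /\<^sub>R fact i)" for i
    by (simp add: power_add field_simps)
  ultimately show ?thesis
    by (subst sums_zero_iff_shift[of k, symmetric]) auto
qed

lemma nn_integral_poisson0_factorial_moment:
  assumes "0 \<le> l"
  shows "(\<integral>\<^sup>+n. ennreal (fact n / fact (n - k) * of_bool (k \<le> n)) \<partial>poisson0 l) = ennreal (l ^ k)"
proof (cases "l = 0")
  case False
  with assms show ?thesis
    by (intro nn_integral_pmf_nat_sums) (use poisson_factorial_moment_sums in \<open>auto simp: pmf_poisson0\<close>)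
qed (simp add: poisson0_def)

lemma nn_integral_poisson0_id:
  assumes "0 \<le> l"
  shows "(\<integral>\<^sup>+n. ennreal (real n) \<partial>poisson0 l) = ennreal l"
proof -
  have "fact n / fact (n - 1) * of_bool (1 \<le> n) = (real n :: real)" for n :: nat
    by (cases n) (auto simp: field_simps)
  then show ?thesis
    using nn_integral_poisson0_factorial_moment[OF assms, of 1] by simp
qed

lemma nn_integral_poisson0_falling2:
  assumes "0 \<le> l"
  shows "(\<integral>\<^sup>+n. ennreal (real n * (real n - 1)) \<partial>poisson0 l) = ennreal (l ^ 2)"
proof -
  have "fact n / fact (n - 2) * of_bool (2 \<le> n) = (real n * (real n - 1) :: real)" for n :: nat
  proof (cases n)
    case (Suc m)
    then show ?thesis by (cases m) (auto simp: field_simps)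
  qed simp
  then show ?thesis
    using nn_integral_poisson0_factorial_moment[OF assms, of 2] by simp
qed

lemma nn_integral_compound_poisson_id:
  fixes X :: "nat pmf"
  assumes m1: "(\<integral>\<^sup>+x. ennreal (real x) \<partial>X) = ennreal m1" and "0 \<le> m1" "0 \<le> l"
  shows "(\<integral>\<^sup>+y. ennreal (real y) \<partial>bind_pmf (poisson0 l) (\<lambda>n. iid_sum n X)) = ennreal (l * m1)"
proof -
  have "(\<integral>\<^sup>+y. ennreal (real y) \<partial>bind_pmf (poisson0 l) (\<lambda>n. iid_sum n X))
      = (\<integral>\<^sup>+n. ennreal (0 + m1 * real n + 0 * real n) \<partial>poisson0 l)"
    by (simp add: nn_integral_iid_sum_id[OF m1 \<open>0 \<le> m1\<close>] mult.commute)
  also have "\<dots> = ennreal (0 + m1 * l + 0 * l)"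
    by (rule nn_integral_pmf_lincomb) (use assms nn_integral_poisson0_id in auto)
  finally show ?thesis by (simp add: mult.commute)
qed

lemma nn_integral_compound_poisson_square:
  fixes X :: "nat pmf"
  assumes m1: "(\<integral>\<^sup>+x. ennreal (real x) \<partial>X) = ennreal m1"
    and m2: "(\<integral>\<^sup>+x. ennreal (real x ^ 2) \<partial>X) = ennreal m2"
    and "0 \<le> m1" "0 \<le> m2" "0 \<le> l"
  shows "(\<integral>\<^sup>+y. ennreal (real y ^ 2) \<partial>bind_pmf (poisson0 l) (\<lambda>n. iid_sum n X))
    = ennreal (l * m2 + l ^ 2 * m1 ^ 2)"
proof -
  have "(\<integral>\<^sup>+y. ennreal (real y ^ 2) \<partial>bind_pmf (poisson0 l) (\<lambda>n. iid_sum n X))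
      = (\<integral>\<^sup>+n. ennreal (0 + m2 * real n + m1 ^ 2 * (real n * (real n - 1))) \<partial>poisson0 l)"
    by (simp add: nn_integral_iid_sum_square[OF m1 m2 \<open>0 \<le> m1\<close> \<open>0 \<le> m2\<close>] algebra_simps)
  also have "\<dots> = ennreal (0 + m2 * l + m1 ^ 2 * l ^ 2)"
  proof (rule nn_integral_pmf_lincomb)
    show "0 \<le> real n * (real n - 1)" for n :: nat
      by (cases n) auto
  qed (use assms nn_integral_poisson0_id nn_integral_poisson0_falling2 in auto)
  finally show ?thesis by (simp add: mult.commute)
qed

lemma cum_int_nonneg:
  assumes "\<And>t. 0 \<le> psi t"
  shows "0 \<le> cum_int psi t"
  unfolding cum_int_def set_lebesgue_integral_def
  by (intro integral_nonneg_AE AE_I2) (simp add: assms)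

lemma mono_cum_int:
  assumes nonneg: "\<And>t. 0 \<le> psi t"
    and int: "\<And>t. 0 \<le> t \<Longrightarrow> set_integrable lborel {0..t} psi"
  shows "mono (cum_int psi)"
proof (rule monoI)
  fix s t :: real
  assume "s \<le> t"
  show "cum_int psi s \<le> cum_int psi t"
  proof (cases "0 \<le> s")
    case True
    with \<open>s \<le> t\<close> show ?thesis
      unfolding cum_int_def set_lebesgue_integral_def using int[of s] int[of t]
      by (intro integral_mono) (auto simp: set_integrable_def indicator_def nonneg)
  next
    case False
    then have "cum_int psi s = 0"
      by (simp add: cum_int_def set_lebesgue_integral_def)
    then show ?thesis
      using cum_int_nonneg[of psi t] nonneg by simp
  qed
qed

lemma borel_measurable_pmf_poisson0 [measurable]:
  "(\<lambda>l. pmf (poisson0 l) n) \<in> borel_measurable borel"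
  unfolding pmf_poisson0 by measurable

lemma measurable_Y_law_kernel:
  assumes [measurable]: "cum_int psi \<in> borel_measurable M"
  shows "(\<lambda>a. measure_pmf (Y_law psi Xt a)) \<in> measurable M (subprob_algebra (count_space UNIV))"
proof (rule measurable_subprob_algebra)
  fix B :: "nat set"
  have "emeasure (measure_pmf (Y_law psi Xt a)) B
      = (\<Sum>n. ennreal (pmf (poisson0 (cum_int psi a)) n) * emeasure (measure_pmf (iid_sum n Xt)) B)" for a
    by (simp add: Y_law_def nn_integral_measure_pmf nn_integral_count_space_nat)
  then show "(\<lambda>a. emeasure (measure_pmf (Y_law psi Xt a)) B) \<in> borel_measurable M"
    by simp
qed (auto intro: subprob_space_measure_pmf)

lemma prob_space_age_law:
  assumes "fA \<in> borel_measurable borel" "(\<integral>\<^sup>+ a\<in>{0..}. ennreal (fA a) \<partial>lborel) = 1"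
  shows "prob_space (age_law fA)"
proof (rule prob_spaceI)
  show "emeasure (age_law fA) (space (age_law fA)) = 1"
    using assms by (simp add: age_law_def emeasure_density mult.commute)
qed

lemma sets_age_law [measurable_cong]: "sets (age_law fA) = sets borel"
  by (simp add: age_law_def)

lemma nn_integral_Ytilde_law:
  assumes "cum_int psi \<in> borel_measurable borel"
  shows "(\<integral>\<^sup>+y. f y \<partial>Ytilde_law psi Xt fA)
    = (\<integral>\<^sup>+a. \<integral>\<^sup>+y. f y \<partial>Y_law psi Xt a \<partial>age_law fA)"
  unfolding Ytilde_law_def
  by (rule nn_integral_bind[OF _ measurable_Y_law_kernel]) (use assms in simp_all)

lemma sets_Ytilde_law: "sets (Ytilde_law psi Xt fA) = sets (count_space UNIV)"
  by (simp add: Ytilde_law_def sets_bind[where N = "count_space UNIV"] age_law_def)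

lemma moment_ratio_ge:
  fixes e1 e2 m1 m2 :: real
  assumes "0 < e1" "0 < m1" "e1 ^ 2 \<le> e2"
  shows "e1 * m1 + m2 / m1 \<le> (e1 * m2 + e2 * m1 ^ 2) / (e1 * m1)"
proof -
  have "(e1 * m1 + m2 / m1) * (e1 * m1) = e1 ^ 2 * m1 ^ 2 + e1 * m2"
    using assms by (simp add: field_simps power2_eq_square)
  also have "\<dots> \<le> e1 * m2 + e2 * m1 ^ 2"
    using assms by (simp add: mult_right_mono)
  finally show ?thesis
    using assms by (simp add: pos_le_divide_eq)
qed

lemma (in prob_space) mixed_moment_ratio_ge:
  fixes Y :: "nat measure" and L :: "'a \<Rightarrow> real"
  assumes [measurable]: "L \<in> borel_measurable M" and L_nonneg: "\<And>a. 0 \<le> L a"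
    and "0 < m1" "0 \<le> m2"
    and sets_Y: "sets Y = sets (count_space UNIV)"
    and Y1: "(\<integral>\<^sup>+y. ennreal (real y) \<partial>Y) = (\<integral>\<^sup>+a. ennreal (L a * m1) \<partial>M)"
    and Y2: "(\<integral>\<^sup>+y. ennreal (real y ^ 2) \<partial>Y) = (\<integral>\<^sup>+a. ennreal (L a * m2 + L a ^ 2 * m1 ^ 2) \<partial>M)"
    and Y2_int: "integrable Y (\<lambda>y. real y ^ 2)"
    and Y_pos: "0 < (\<integral>y. real y \<partial>Y)"
  shows "(\<integral>y. real y \<partial>Y) + m2 / m1 \<le> (\<integral>y. real y ^ 2 \<partial>Y) / (\<integral>y. real y \<partial>Y)"
proof -
  have Y_meas: "f \<in> borel_measurable Y" for f :: "nat \<Rightarrow> real"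
    by (simp add: measurable_cong_sets[OF sets_Y refl])
  have "ennreal (m1 ^ 2) * (\<integral>\<^sup>+a. ennreal (L a ^ 2) \<partial>M)
      = (\<integral>\<^sup>+a. ennreal (L a ^ 2 * m1 ^ 2) \<partial>M)"
    by (subst nn_integral_cmult[symmetric]) (auto simp: ennreal_mult mult.commute)
  also have "\<dots> \<le> (\<integral>\<^sup>+y. ennreal (real y ^ 2) \<partial>Y)"
    unfolding Y2 using L_nonneg \<open>0 \<le> m2\<close> by (intro nn_integral_mono) simp
  also have "\<dots> < \<infinity>"
    using nn_integral_eq_integral[OF Y2_int] by simp
  finally have L2_int: "integrable M (\<lambda>a. L a ^ 2)"
    using \<open>0 < m1\<close> by (intro integrableI_nonneg) (auto simp: ennreal_mult_less_top)
  have L_int: "integrable M L"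
    using L2_int by (rule square_integrable_imp_integrable[rotated]) simp
  have "(\<integral>y. real y \<partial>Y) = enn2real (\<integral>\<^sup>+a. ennreal (L a * m1) \<partial>M)"
    by (simp add: integral_eq_nn_integral[OF Y_meas] Y1)
  also have "\<dots> = expectation L * m1"
    using L_int L_nonneg \<open>0 < m1\<close> by (simp add: nn_integral_eq_integral)
  finally have EY1: "(\<integral>y. real y \<partial>Y) = expectation L * m1" .
  have "(\<integral>y. real y ^ 2 \<partial>Y) = enn2real (\<integral>\<^sup>+a. ennreal (L a * m2 + L a ^ 2 * m1 ^ 2) \<partial>M)"
    by (simp add: integral_eq_nn_integral[OF Y_meas] Y2)
  also have "\<dots> = expectation L * m2 + expectation (\<lambda>a. L a ^ 2) * m1 ^ 2"
    using L_int L2_int L_nonneg \<open>0 \<le> m2\<close>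
    by (subst nn_integral_eq_integral) (auto simp del: ennreal_plus)
  finally have EY2: "(\<integral>y. real y ^ 2 \<partial>Y) = expectation L * m2 + expectation (\<lambda>a. L a ^ 2) * m1 ^ 2" .
  have "expectation L ^ 2 \<le> expectation (\<lambda>a. L a ^ 2)"
    using variance_eq[OF L_int L2_int] variance_positive[of L] by simp
  moreover have "0 < expectation L"
    using Y_pos \<open>0 < m1\<close> by (simp add: EY1 zero_less_mult_iff)
  ultimately show ?thesis
    unfolding EY1 EY2 using \<open>0 < m1\<close> by (rule moment_ratio_ge[rotated 2])
qed

theorem mainTheorem6:
  fixes psi :: "real \<Rightarrow> real" and Xt :: "nat pmf" and fA :: "real \<Rightarrow> real"
  assumes psi_nonneg: "\<And>t. 0 \<le> psi t"
    and psi_int: "\<And>t. 0 \<le> t \<Longrightarrow> set_integrable lborel {0..t} psi"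
    and fA_nonneg: "\<And>a. 0 \<le> fA a"
    and fA_meas: "fA \<in> borel_measurable borel"
    and fA_prob: "(\<integral>\<^sup>+ a\<in>{0..}. ennreal (fA a) \<partial>lborel) = 1"
    and X_int2: "integrable (measure_pmf Xt) (\<lambda>x. real x ^ 2)"
    and X_pos: "measure_pmf.expectation Xt real > 0"
    and Y_int2: "integrable (Ytilde_law psi Xt fA) (\<lambda>y. real y ^ 2)"
    and Y_pos: "(\<integral>y. real y \<partial>Ytilde_law psi Xt fA) > 0"
  shows "(\<integral>y. real y ^ 2 \<partial>Ytilde_law psi Xt fA) / (\<integral>y. real y \<partial>Ytilde_law psi Xt fA)
           \<ge> (\<integral>y. real y \<partial>Ytilde_law psi Xt fA)
             + measure_pmf.expectation Xt (\<lambda>x. real x ^ 2) / measure_pmf.expectation Xt real"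
proof -
  define m1 where "m1 = measure_pmf.expectation Xt real"
  define m2 where "m2 = measure_pmf.expectation Xt (\<lambda>x. real x ^ 2)"
  have L_meas: "cum_int psi \<in> borel_measurable borel"
    using mono_cum_int[OF psi_nonneg psi_int] by (rule borel_measurable_mono)
  have L_nonneg: "0 \<le> cum_int psi t" for t
    using psi_nonneg by (rule cum_int_nonneg)
  have "integrable Xt real"
    using X_int2 by (rule measure_pmf.square_integrable_imp_integrable[rotated]) simp
  then have m1e: "(\<integral>\<^sup>+x. ennreal (real x) \<partial>Xt) = ennreal m1"
    unfolding m1_def by (rule nn_integral_eq_integral) simp
  have m2e: "(\<integral>\<^sup>+x. ennreal (real x ^ 2) \<partial>Xt) = ennreal m2"
    unfolding m2_def using X_int2 by (rule nn_integral_eq_integral) simp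
  have "0 < m1" "0 \<le> m2"
    using X_pos by (auto simp: m1_def m2_def)
  interpret A: prob_space "age_law fA"
    using fA_meas fA_prob by (rule prob_space_age_law)
  have "(\<integral>y. real y \<partial>Ytilde_law psi Xt fA) + m2 / m1
      \<le> (\<integral>y. real y ^ 2 \<partial>Ytilde_law psi Xt fA) / (\<integral>y. real y \<partial>Ytilde_law psi Xt fA)"
  proof (rule A.mixed_moment_ratio_ge[OF _ L_nonneg \<open>0 < m1\<close> \<open>0 \<le> m2\<close> sets_Ytilde_law
      _ _ Y_int2 Y_pos])
    show "(\<integral>\<^sup>+y. ennreal (real y) \<partial>Ytilde_law psi Xt fA)
        = (\<integral>\<^sup>+a. ennreal (cum_int psi a * m1) \<partial>age_law fA)"
      unfolding nn_integral_Ytilde_law[OF L_meas] Y_law_def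
      using nn_integral_compound_poisson_id[OF m1e] \<open>0 < m1\<close> L_nonneg by simp
    show "(\<integral>\<^sup>+y. ennreal (real y ^ 2) \<partial>Ytilde_law psi Xt fA)
        = (\<integral>\<^sup>+a. ennreal (cum_int psi a * m2 + cum_int psi a ^ 2 * m1 ^ 2) \<partial>age_law fA)"
      unfolding nn_integral_Ytilde_law[OF L_meas] Y_law_def
      using nn_integral_compound_poisson_square[OF m1e m2e] \<open>0 < m1\<close> \<open>0 \<le> m2\<close> L_nonneg by simp
  qed (use L_meas in measurable)
  then show ?thesis
    by (simp add: m1_def m2_def)
qed

end
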